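(* Let $0\le\alpha<\tfrac12$ and let $D$ be a distribution on $\{0,1\}^n$ given by a forest BN (every node has at most one parent) with all conditional probabilities in $(0,1)$ that is $\alpha$-difference bounded. Then every conjunction $f$ of $d$ literals satisfies $L_1(f)\le\left(\frac{2-2\alpha}{1-2\alpha}\right)^{2d}$.
   Context: For a BN with parent sets $\operatorname{pa}(v)$, let $\mu_{v,x_{\operatorname{pa}(v)}}=P(X_v=1\mid X_{\operatorname{pa}(v)}=x_{\operatorname{pa}(v)})$ and $\sigma_{v,x_{\operatorname{pa}(v)}}=\sqrt{\mu_{v,x_{\operatorname{pa}(v)}}(1-\mu_{v,x_{\operatorname{pa}(v)}})}$ (for roots, $\mu_v=P(X_v=1)$). The BN is $\alpha$-difference bounded if for every $v$ and every two assignments $x,y$ to $\operatorname{pa}(v)$, $|\mu_{v,x}-\mu_{v,y}|\le\alpha$ and $|\sigma_{v,x}-\sigma_{v,y}|\le\alpha$. The BN-induced basis is $\phi_v(x)=(x_v-\mu_{v,x_{\operatorname{pa}(v)}})/\sigma_{v,x_{\operatorname{pa}(v)}}$, $\phi_S=\prod_{v\in S}\phi_v$; $\hat f_S=\mathbb{E}_D[f(X)\phi_S(X)]$; $L_1(f)=\sum_{S\subseteq[n]}|\hat f_S|$. A conjunction of $d$ literals is $f(x)=\prod_{i\in T_1}x_i\prod_{j\in T_0}(1-x_j)$ with $T_0,T_1$ disjoint and $|T_0\cup T_1|=d$. *)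

theory Defs
  imports Complex_Main
begin

definition cube :: "nat \<Rightarrow> (nat \<Rightarrow> bool) set" where
  "cube n = {x. \<forall>i. n \<le> i \<longrightarrow> \<not> x i}"

definition ind :: "bool \<Rightarrow> real" where
  "ind b = (if b then 1 else 0)"

text \<open>Forest BN: each node v has at most one parent par v (None = root).
  cp v b = P(X_v = 1 | X_parent = b) for non-roots; for roots cp v False = P(X_v = 1).\<close>

definition bn_mu :: "(nat \<Rightarrow> nat option) \<Rightarrow> (nat \<Rightarrow> bool \<Rightarrow> real) \<Rightarrow> nat \<Rightarrow> (nat \<Rightarrow> bool) \<Rightarrow> real" where
  "bn_mu par cp v x = (case par v of None \<Rightarrow> cp v False | Some u \<Rightarrow> cp v (x u))"

definition bn_sigma :: "(nat \<Rightarrow> nat option) \<Rightarrow> (nat \<Rightarrow> bool \<Rightarrow> real) \<Rightarrow> nat \<Rightarrow> (nat \<Rightarrow> bool) \<Rightarrow> real" where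
  "bn_sigma par cp v x = sqrt (bn_mu par cp v x * (1 - bn_mu par cp v x))"

definition bn_dist :: "nat \<Rightarrow> (nat \<Rightarrow> nat option) \<Rightarrow> (nat \<Rightarrow> bool \<Rightarrow> real) \<Rightarrow> (nat \<Rightarrow> bool) \<Rightarrow> real" where
  "bn_dist n par cp x = (\<Prod>v<n. if x v then bn_mu par cp v x else 1 - bn_mu par cp v x)"

definition bn_phi :: "(nat \<Rightarrow> nat option) \<Rightarrow> (nat \<Rightarrow> bool \<Rightarrow> real) \<Rightarrow> nat \<Rightarrow> (nat \<Rightarrow> bool) \<Rightarrow> real" where
  "bn_phi par cp v x = (ind (x v) - bn_mu par cp v x) / bn_sigma par cp v x"

definition bn_phiS :: "(nat \<Rightarrow> nat option) \<Rightarrow> (nat \<Rightarrow> bool \<Rightarrow> real) \<Rightarrow> nat set \<Rightarrow> (nat \<Rightarrow> bool) \<Rightarrow> real" where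
  "bn_phiS par cp S x = (\<Prod>v\<in>S. bn_phi par cp v x)"

definition bn_coeff :: "nat \<Rightarrow> (nat \<Rightarrow> nat option) \<Rightarrow> (nat \<Rightarrow> bool \<Rightarrow> real) \<Rightarrow> ((nat \<Rightarrow> bool) \<Rightarrow> real) \<Rightarrow> nat set \<Rightarrow> real" where
  "bn_coeff n par cp f S = (\<Sum>x\<in>cube n. bn_dist n par cp x * f x * bn_phiS par cp S x)"

definition bn_L1 :: "nat \<Rightarrow> (nat \<Rightarrow> nat option) \<Rightarrow> (nat \<Rightarrow> bool \<Rightarrow> real) \<Rightarrow> ((nat \<Rightarrow> bool) \<Rightarrow> real) \<Rightarrow> real" where
  "bn_L1 n par cp f = (\<Sum>S\<in>Pow {..<n}. \<bar>bn_coeff n par cp f S\<bar>)"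

text \<open>Forest BN on n nodes: parents are nodes in range, and the parent relation is acyclic
  (witnessed by a rank function strictly increasing from parent to child).\<close>
definition forest_bn :: "nat \<Rightarrow> (nat \<Rightarrow> nat option) \<Rightarrow> bool" where
  "forest_bn n par \<longleftrightarrow> (\<forall>v<n. \<forall>u. par v = Some u \<longrightarrow> u < n) \<and>
     (\<exists>rank :: nat \<Rightarrow> nat. \<forall>v<n. \<forall>u. par v = Some u \<longrightarrow> rank u < rank v)"

definition diff_bounded :: "nat \<Rightarrow> (nat \<Rightarrow> nat option) \<Rightarrow> (nat \<Rightarrow> bool \<Rightarrow> real) \<Rightarrow> real \<Rightarrow> bool" where
  "diff_bounded n par cp \<alpha> \<longleftrightarrow> (\<forall>v<n. \<forall>x\<in>cube n. \<forall>y\<in>cube n.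
      \<bar>bn_mu par cp v x - bn_mu par cp v y\<bar> \<le> \<alpha> \<and>
      \<bar>bn_sigma par cp v x - bn_sigma par cp v y\<bar> \<le> \<alpha>)"

definition conjunction :: "nat set \<Rightarrow> nat set \<Rightarrow> (nat \<Rightarrow> bool) \<Rightarrow> real" where
  "conjunction T0 T1 x = (\<Prod>i\<in>T1. ind (x i)) * (\<Prod>j\<in>T0. 1 - ind (x j))"

end

theory Submission
  imports Defs
begin

text \<open>Peel the forest off one leaf at a time, in order of decreasing rank. If w is a leaf of
  the sub-forest on V + w, summing out x_w turns the coefficients of S and of S + w (for S a
  subset of V) into the coefficients of S over V of the two functions
  (1 - mu_w) f[x_w := 0] + mu_w f[x_w := 1]  and  sigma_w (f[x_w := 1] - f[x_w := 0]),
  because mu_w (1 - mu_w) / sigma_w = sigma_w. Hence the L1 norm over V + w is the sum of two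
  L1 norms over V. If the conjunction f has a literal on w, the two functions are the rest g
  of the conjunction times mu_w (or 1 - mu_w) and times sigma_w, which are affine in the parent
  bit x_p with constant term in [0, 1] and slope at most alpha. Since x_p g is zero or a
  conjunction of at most d literals, induction gives L1(f) <= 2 K^(d-1) + 2 alpha K^d = K^d
  for K = 2 / (1 - 2 alpha), and K <= ((2 - 2 alpha) / (1 - 2 alpha))^2.\<close>

definition cube_on :: "nat set \<Rightarrow> (nat \<Rightarrow> bool) set" where
  "cube_on V = {x. \<forall>i. i \<notin> V \<longrightarrow> \<not> x i}"

definition bn_dist_on ::
    "(nat \<Rightarrow> nat option) \<Rightarrow> (nat \<Rightarrow> bool \<Rightarrow> real) \<Rightarrow> nat set \<Rightarrow> (nat \<Rightarrow> bool) \<Rightarrow> real" where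
  "bn_dist_on par cp V x = (\<Prod>v\<in>V. if x v then bn_mu par cp v x else 1 - bn_mu par cp v x)"

definition bn_expect ::
    "(nat \<Rightarrow> nat option) \<Rightarrow> (nat \<Rightarrow> bool \<Rightarrow> real) \<Rightarrow> nat set \<Rightarrow> ((nat \<Rightarrow> bool) \<Rightarrow> real) \<Rightarrow> real" where
  "bn_expect par cp V f = (\<Sum>x\<in>cube_on V. bn_dist_on par cp V x * f x)"

definition bn_L1_on ::
    "(nat \<Rightarrow> nat option) \<Rightarrow> (nat \<Rightarrow> bool \<Rightarrow> real) \<Rightarrow> nat set \<Rightarrow> ((nat \<Rightarrow> bool) \<Rightarrow> real) \<Rightarrow> real" where
  "bn_L1_on par cp V f = (\<Sum>S\<in>Pow V. \<bar>bn_expect par cp V (\<lambda>x. f x * bn_phiS par cp S x)\<bar>)"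

definition new_leaf :: "(nat \<Rightarrow> nat option) \<Rightarrow> nat set \<Rightarrow> nat \<Rightarrow> bool" where
  "new_leaf par V w \<longleftrightarrow> w \<notin> V \<and> par w \<noteq> Some w \<and> (\<forall>v\<in>V. par v \<noteq> Some w)"

lemma bn_L1_eq_bn_L1_on: "bn_L1 n par cp f = bn_L1_on par cp {..<n} f"
  unfolding bn_L1_def bn_L1_on_def bn_coeff_def bn_expect_def cube_def cube_on_def
    bn_dist_def bn_dist_on_def
  by (simp add: mult.assoc not_less)

lemma sum_Pow_insert:
  assumes "finite V" "w \<notin> V"
  shows "(\<Sum>S\<in>Pow (insert w V). g S) = (\<Sum>S\<in>Pow V. g S + g (insert w S))"
proof -
  have inj: "inj_on (insert w) (Pow V)"
    using assms(2) by (intro inj_onI) (metis PowD insert_ident subsetD)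
  have "(\<Sum>S\<in>Pow (insert w V). g S) = (\<Sum>S\<in>Pow V. g S) + (\<Sum>S\<in>insert w ` Pow V. g S)"
    unfolding Pow_insert by (rule sum.union_disjoint) (use assms in auto)
  also have "(\<Sum>S\<in>insert w ` Pow V. g S) = (\<Sum>S\<in>Pow V. g (insert w S))"
    using inj by (rule sum.reindex_cong) simp_all
  finally show ?thesis by (simp add: sum.distrib)
qed

lemma cube_on_eq_image_Pow: "cube_on V = (\<lambda>A i. i \<in> A) ` Pow V"
proof -
  have "x = (\<lambda>i. i \<in> {i. x i})" for x :: "nat \<Rightarrow> bool" by simp
  then show ?thesis unfolding cube_on_def by (auto simp: image_iff) blast
qed

lemma sum_cube_on_eq_sum_Pow: "(\<Sum>x\<in>cube_on V. h x) = (\<Sum>A\<in>Pow V. h (\<lambda>i. i \<in> A))"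
  unfolding cube_on_eq_image_Pow by (rule sum.reindex_cong[OF inj_on_subset[of _ UNIV]])
    (auto simp: inj_def fun_eq_iff)

lemma sum_cube_on_insert:
  assumes "finite V" "w \<notin> V"
  shows "(\<Sum>x\<in>cube_on (insert w V). h x) = (\<Sum>x\<in>cube_on V. h x + h (x(w := True)))"
proof -
  have "(\<lambda>i. i \<in> insert w A) = (\<lambda>i. i \<in> A)(w := True)" for A by (auto simp: fun_eq_iff)
  then show ?thesis
    by (simp add: sum_cube_on_eq_sum_Pow sum_Pow_insert[OF assms])
qed

lemma bn_mu_cong:
  "(\<And>u. par v = Some u \<Longrightarrow> x u = y u) \<Longrightarrow> bn_mu par cp v x = bn_mu par cp v y"
  by (cases "par v") (simp_all add: bn_mu_def)

lemma bn_sigma_cong: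
  assumes "\<And>u. par v = Some u \<Longrightarrow> x u = y u"
  shows "bn_sigma par cp v x = bn_sigma par cp v y"
  unfolding bn_sigma_def using bn_mu_cong[of par v x y cp, OF assms] by simp

lemma bn_mu_upd: "par v \<noteq> Some w \<Longrightarrow> bn_mu par cp v (x(w := b)) = bn_mu par cp v x"
  by (rule bn_mu_cong) auto

lemma bn_sigma_upd: "par v \<noteq> Some w \<Longrightarrow> bn_sigma par cp v (x(w := b)) = bn_sigma par cp v x"
  by (rule bn_sigma_cong) auto

lemma bn_phiS_upd:
  "w \<notin> S \<Longrightarrow> \<forall>v\<in>S. par v \<noteq> Some w \<Longrightarrow> bn_phiS par cp S (x(w := b)) = bn_phiS par cp S x"
  unfolding bn_phiS_def bn_phi_def by (intro prod.cong) (auto simp: bn_mu_upd bn_sigma_upd)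

lemma bn_dist_on_upd:
  "w \<notin> V \<Longrightarrow> \<forall>v\<in>V. par v \<noteq> Some w \<Longrightarrow> bn_dist_on par cp V (x(w := b)) = bn_dist_on par cp V x"
  unfolding bn_dist_on_def by (intro prod.cong) (auto simp: bn_mu_upd)

lemma bn_sigma_eq_div:
  assumes "0 \<le> bn_mu par cp v x" "bn_mu par cp v x \<le> 1"
  shows "bn_mu par cp v x * (1 - bn_mu par cp v x) / bn_sigma par cp v x = bn_sigma par cp v x"
  using assms unfolding bn_sigma_def by (simp add: real_div_sqrt)

lemma bn_sigma_bounds:
  "0 \<le> bn_mu par cp v x \<Longrightarrow> bn_mu par cp v x \<le> 1
     \<Longrightarrow> 0 \<le> bn_sigma par cp v x \<and> bn_sigma par cp v x \<le> 1"
  unfolding bn_sigma_def by (simp add: mult_le_one)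

lemma bn_mu_sigma_affine:
  fixes \<alpha> :: real
  assumes "\<And>x y. \<bar>bn_mu par cp w x - bn_mu par cp w y\<bar> \<le> \<alpha>
    \<and> \<bar>bn_sigma par cp w x - bn_sigma par cp w y\<bar> \<le> \<alpha>"
  obtains a1 b1 p a2 b2 where "\<And>x. bn_mu par cp w x = a1 + b1 * ind (x p)"
    and "\<And>x. bn_sigma par cp w x = a2 + b2 * ind (x p)" and "\<bar>b1\<bar> \<le> \<alpha>" "\<bar>b2\<bar> \<le> \<alpha>"
proof -
  \<comment> \<open>for a root any \<open>p\<close> will do: then \<open>\<mu>\<^sub>w\<close> and \<open>\<sigma>\<^sub>w\<close> are constant\<close>
  define p where "p = (case par w of Some u \<Rightarrow> u | None \<Rightarrow> w)"
  define x0 x1 where "x0 = (\<lambda>_ :: nat. False)" and "x1 = (\<lambda>i. i = p)"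
  have agree: "x u = (if x p then x1 else x0) u" if "par w = Some u" for x u
    using that by (simp add: p_def x0_def x1_def)
  define a1 b1 where "a1 = bn_mu par cp w x0" and "b1 = bn_mu par cp w x1 - bn_mu par cp w x0"
  define a2 b2 where "a2 = bn_sigma par cp w x0" and "b2 = bn_sigma par cp w x1 - bn_sigma par cp w x0"
  have "bn_mu par cp w x = a1 + b1 * ind (x p)" and "bn_sigma par cp w x = a2 + b2 * ind (x p)" for x
    using bn_mu_cong[of par w x "if x p then x1 else x0" cp]
      bn_sigma_cong[of par w x "if x p then x1 else x0" cp] agree[of _ x]
    by (cases "x p"; simp add: a1_def b1_def a2_def b2_def ind_def)+
  moreover have "\<bar>b1\<bar> \<le> \<alpha>" "\<bar>b2\<bar> \<le> \<alpha>"
    using assms[of x1 x0] by (simp_all add: b1_def b2_def)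
  ultimately show ?thesis by (rule that)
qed

lemma bn_expect_cong:
  "(\<And>x. x \<in> cube_on V \<Longrightarrow> f x = g x) \<Longrightarrow> bn_expect par cp V f = bn_expect par cp V g"
  unfolding bn_expect_def by (simp cong: sum.cong)

lemma bn_expect_add:
  "bn_expect par cp V (\<lambda>x. f x + g x) = bn_expect par cp V f + bn_expect par cp V g"
  unfolding bn_expect_def by (simp add: distrib_left sum.distrib)

lemma bn_expect_scale:
  "bn_expect par cp V (\<lambda>x. c * f x) = c * bn_expect par cp V f"
  unfolding bn_expect_def by (simp add: sum_distrib_left mult_ac)

lemma bn_L1_on_nonneg: "0 \<le> bn_L1_on par cp V f"
  unfolding bn_L1_on_def by (simp add: sum_nonneg)

lemma bn_L1_on_cong:
  "(\<And>x. x \<in> cube_on V \<Longrightarrow> f x = g x) \<Longrightarrow> bn_L1_on par cp V f = bn_L1_on par cp V g"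
  unfolding bn_L1_on_def by (simp cong: bn_expect_cong)

lemma bn_L1_on_add_le:
  "bn_L1_on par cp V (\<lambda>x. f x + g x) \<le> bn_L1_on par cp V f + bn_L1_on par cp V g"
  unfolding bn_L1_on_def sum.distrib[symmetric]
  by (rule sum_mono) (simp add: distrib_right bn_expect_add abs_triangle_ineq)

lemma bn_L1_on_scale: "bn_L1_on par cp V (\<lambda>x. c * f x) = \<bar>c\<bar> * bn_L1_on par cp V f"
  unfolding bn_L1_on_def
  by (simp add: mult.assoc bn_expect_scale abs_mult sum_distrib_left)

lemma bn_L1_on_affine_le:
  "bn_L1_on par cp V (\<lambda>x. (a + b * ind (x p)) * g x)
     \<le> \<bar>a\<bar> * bn_L1_on par cp V g + \<bar>b\<bar> * bn_L1_on par cp V (\<lambda>x. ind (x p) * g x)"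
  using bn_L1_on_add_le[of par cp V "\<lambda>x. a * g x" "\<lambda>x. b * (ind (x p) * g x)"]
  by (simp add: bn_L1_on_scale distrib_right mult.assoc)

lemma bn_L1_on_ind_outside: "p \<notin> V \<Longrightarrow> bn_L1_on par cp V (\<lambda>x. ind (x p) * g x) = 0"
  by (subst bn_L1_on_cong[where g = "\<lambda>_. 0"]) (auto simp: cube_on_def ind_def bn_L1_on_def bn_expect_def)

subsection \<open>Adding a leaf\<close>

lemma bn_dist_on_insert:
  "finite V \<Longrightarrow> w \<notin> V \<Longrightarrow> bn_dist_on par cp (insert w V) x
     = (if x w then bn_mu par cp w x else 1 - bn_mu par cp w x) * bn_dist_on par cp V x"
  by (simp add: bn_dist_on_def)

lemma bn_expect_insert_leaf:
  assumes "finite V" "new_leaf par V w"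
  shows "bn_expect par cp (insert w V) f
    = bn_expect par cp V (\<lambda>x. (1 - bn_mu par cp w x) * f x + bn_mu par cp w x * f (x(w := True)))"
proof -
  have leaf: "w \<notin> V" "par w \<noteq> Some w" "\<forall>v\<in>V. par v \<noteq> Some w"
    using assms(2) by (auto simp: new_leaf_def)
  have "bn_dist_on par cp (insert w V) x * f x
      + bn_dist_on par cp (insert w V) (x(w := True)) * f (x(w := True))
    = bn_dist_on par cp V x * ((1 - bn_mu par cp w x) * f x + bn_mu par cp w x * f (x(w := True)))"
    if "x \<in> cube_on V" for x
  proof -
    have "\<not> x w" using that leaf(1) by (simp add: cube_on_def)
    then show ?thesis
      by (simp add: bn_dist_on_insert[OF assms(1) leaf(1)] bn_dist_on_upd[OF leaf(1,3)]
          bn_mu_upd leaf(2) algebra_simps)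
  qed
  then show ?thesis
    unfolding bn_expect_def sum_cube_on_insert[OF assms(1) leaf(1)] by (rule sum.cong[OF refl])
qed

lemma bn_expect_insert_leaf_phiS:
  assumes "finite V" "new_leaf par V w" "S \<subseteq> V"
  shows "bn_expect par cp (insert w V) (\<lambda>x. f x * bn_phiS par cp S x)
    = bn_expect par cp V (\<lambda>x. ((1 - bn_mu par cp w x) * f x + bn_mu par cp w x * f (x(w := True)))
        * bn_phiS par cp S x)"
proof -
  have "bn_phiS par cp S (x(w := True)) = bn_phiS par cp S x" for x
    using assms(2,3) unfolding new_leaf_def by (intro bn_phiS_upd) auto
  then show ?thesis by (simp add: bn_expect_insert_leaf[OF assms(1,2)] algebra_simps)
qed

lemma bn_expect_insert_leaf_phiS_insert:
  assumes "finite V" "new_leaf par V w" "S \<subseteq> V"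
    and mu: "\<And>x. 0 \<le> bn_mu par cp w x \<and> bn_mu par cp w x \<le> 1"
  shows "bn_expect par cp (insert w V) (\<lambda>x. f x * bn_phiS par cp (insert w S) x)
    = bn_expect par cp V (\<lambda>x. bn_sigma par cp w x * (f (x(w := True)) - f x) * bn_phiS par cp S x)"
proof -
  have leaf: "w \<notin> V" "par w \<noteq> Some w" "\<forall>v\<in>V. par v \<noteq> Some w" "w \<notin> S"
    using assms(2,3) by (auto simp: new_leaf_def)
  let ?mu = "bn_mu par cp w" and ?sigma = "bn_sigma par cp w"
  have phiS: "bn_phiS par cp S (x(w := True)) = bn_phiS par cp S x" for x
    using assms(3) leaf by (intro bn_phiS_upd) auto
  have phiS_insert: "bn_phiS par cp (insert w S) x = bn_phi par cp w x * bn_phiS par cp S x" for x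
    using leaf(4) finite_subset[OF assms(3,1)] by (simp add: bn_phiS_def)
  have phi_w: "bn_phi par cp w x = - ?mu x / ?sigma x"
    "bn_phi par cp w (x(w := True)) = (1 - ?mu x) / ?sigma x" if "x \<in> cube_on V" for x
    using that leaf(1,2) by (auto simp: bn_phi_def ind_def cube_on_def bn_mu_upd bn_sigma_upd)
  have sigma: "?mu x * (1 - ?mu x) / ?sigma x = ?sigma x" for x
    using mu[of x] by (intro bn_sigma_eq_div) auto
  have "(1 - ?mu x) * (f x * (- ?mu x / ?sigma x * bn_phiS par cp S x))
      + ?mu x * (f (x(w := True)) * ((1 - ?mu x) / ?sigma x * bn_phiS par cp S x))
    = ?mu x * (1 - ?mu x) / ?sigma x * (f (x(w := True)) - f x) * bn_phiS par cp S x" for x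
    by (cases "?sigma x = 0") (simp_all add: field_simps)
  then have "(1 - ?mu x) * (f x * (- ?mu x / ?sigma x * bn_phiS par cp S x))
      + ?mu x * (f (x(w := True)) * ((1 - ?mu x) / ?sigma x * bn_phiS par cp S x))
    = ?sigma x * (f (x(w := True)) - f x) * bn_phiS par cp S x" for x
    unfolding sigma .
  then show ?thesis
    unfolding bn_expect_insert_leaf[OF assms(1,2)] phiS_insert phiS
    by (intro bn_expect_cong) (simp add: phi_w)
qed

lemma bn_L1_on_insert_leaf:
  assumes "finite V" "new_leaf par V w" "\<And>x. 0 \<le> bn_mu par cp w x \<and> bn_mu par cp w x \<le> 1"
  shows "bn_L1_on par cp (insert w V) f
    = bn_L1_on par cp V (\<lambda>x. (1 - bn_mu par cp w x) * f x + bn_mu par cp w x * f (x(w := True)))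
      + bn_L1_on par cp V (\<lambda>x. bn_sigma par cp w x * (f (x(w := True)) - f x))"
  using assms(2)
  unfolding bn_L1_on_def new_leaf_def
  by (simp add: sum_Pow_insert[OF assms(1)] sum.distrib bn_expect_insert_leaf_phiS[OF assms(1,2)]
      bn_expect_insert_leaf_phiS_insert[OF assms(1,2) _ assms(3)])

lemma bn_L1_on_insert_leaf_factor:
  assumes "finite V" "new_leaf par V w" "\<And>x. 0 \<le> bn_mu par cp w x \<and> bn_mu par cp w x \<le> 1"
    and "\<And>x. g (x(w := True)) = g x"
  shows "bn_L1_on par cp (insert w V) (\<lambda>x. h (x w) * g x)
    = bn_L1_on par cp V (\<lambda>x. ((1 - bn_mu par cp w x) * h False + bn_mu par cp w x * h True) * g x)
      + \<bar>h True - h False\<bar> * bn_L1_on par cp V (\<lambda>x. bn_sigma par cp w x * g x)"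
proof -
  have no_w: "x w = False" if "x \<in> cube_on V" for x
    using that assms(2) by (auto simp: cube_on_def new_leaf_def)
  have "bn_L1_on par cp V (\<lambda>x. (1 - bn_mu par cp w x) * (h (x w) * g x)
        + bn_mu par cp w x * (h True * g (x(w := True))))
      = bn_L1_on par cp V (\<lambda>x. ((1 - bn_mu par cp w x) * h False + bn_mu par cp w x * h True) * g x)"
    and "bn_L1_on par cp V (\<lambda>x. bn_sigma par cp w x * (h True * g (x(w := True)) - h (x w) * g x))
      = bn_L1_on par cp V (\<lambda>x. (h True - h False) * (bn_sigma par cp w x * g x))"
    by (auto intro!: bn_L1_on_cong simp: no_w assms(4) algebra_simps)
  then show ?thesis
    by (simp add: bn_L1_on_insert_leaf[OF assms(1-3)] bn_L1_on_scale)
qed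

lemma bn_L1_on_insert_leaf_indep:
  assumes "finite V" "new_leaf par V w" "\<And>x. 0 \<le> bn_mu par cp w x \<and> bn_mu par cp w x \<le> 1"
    and "\<And>x. g (x(w := True)) = g x"
  shows "bn_L1_on par cp (insert w V) g = bn_L1_on par cp V g"
  using bn_L1_on_insert_leaf_factor[where h = "\<lambda>_. 1" and g = g, OF assms] by simp

lemma bn_L1_on_insert_leaf_factor_le:
  fixes \<alpha> :: real
  assumes "finite V" "new_leaf par V w" "\<And>x. 0 \<le> bn_mu par cp w x \<and> bn_mu par cp w x \<le> 1"
    and "\<And>x. g (x(w := True)) = g x"
    and mu: "\<And>x. bn_mu par cp w x = a1 + b1 * ind (x p)"
    and sigma: "\<And>x. bn_sigma par cp w x = a2 + b2 * ind (x p)"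
    and "\<bar>b1\<bar> \<le> \<alpha>" "\<bar>b2\<bar> \<le> \<alpha>" and h: "\<And>b. 0 \<le> h b \<and> h b \<le> 1"
  shows "bn_L1_on par cp (insert w V) (\<lambda>x. h (x w) * g x)
    \<le> 2 * bn_L1_on par cp V g + 2 * \<alpha> * bn_L1_on par cp V (\<lambda>x. ind (x p) * g x)"
proof -
  let ?c = "h True - h False"
  let ?Lg = "bn_L1_on par cp V g" and ?Lp = "bn_L1_on par cp V (\<lambda>x. ind (x p) * g x)"
  have a1: "0 \<le> a1" "a1 \<le> 1" and a2: "0 \<le> a2" "a2 \<le> 1"
    using assms(3)[of "\<lambda>_. False"] bn_sigma_bounds[of par cp w "\<lambda>_. False"]
    by (simp_all add: mu sigma ind_def)
  have c: "\<bar>?c\<bar> \<le> 1" using h[of True] h[of False] by linarith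
  have cb: "\<bar>?c\<bar> * \<bar>b\<bar> \<le> \<alpha>" if "\<bar>b\<bar> \<le> \<alpha>" for b
    using mult_mono[OF c that] by simp
  have mean: "\<bar>h False + ?c * a1\<bar> \<le> 1"
  proof -
    have "h False + ?c * a1 = (1 - a1) * h False + a1 * h True" by algebra
    moreover have "0 \<le> \<dots>" "\<dots> \<le> (1 - a1) * 1 + a1 * 1"
      using a1 h[of True] h[of False] by (intro add_nonneg_nonneg add_mono mult_mono; simp)+
    ultimately show ?thesis by simp
  qed
  have "(1 - bn_mu par cp w x) * h False + bn_mu par cp w x * h True
      = h False + ?c * a1 + ?c * b1 * ind (x p)" for x
    by (simp add: mu algebra_simps)
  then have "bn_L1_on par cp (insert w V) (\<lambda>x. h (x w) * g x)
      = bn_L1_on par cp V (\<lambda>x. (h False + ?c * a1 + ?c * b1 * ind (x p)) * g x)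
        + \<bar>?c\<bar> * bn_L1_on par cp V (\<lambda>x. (a2 + b2 * ind (x p)) * g x)"
    by (simp add: bn_L1_on_insert_leaf_factor[where g = g and h = h, OF assms(1-4)] sigma)
  also have "\<dots> \<le> (\<bar>h False + ?c * a1\<bar> * ?Lg + \<bar>?c * b1\<bar> * ?Lp)
      + \<bar>?c\<bar> * (\<bar>a2\<bar> * ?Lg + \<bar>b2\<bar> * ?Lp)"
    by (intro add_mono mult_left_mono bn_L1_on_affine_le) simp_all
  also have "\<dots> \<le> (1 * ?Lg + \<alpha> * ?Lp) + 1 * (1 * ?Lg + \<alpha> * ?Lp)"
    using mean c a2 assms(7,8) cb[OF assms(7)] cb[OF assms(8)] abs_ge_zero[of b1] bn_L1_on_nonneg[of par cp V g]
      bn_L1_on_nonneg[of par cp V "\<lambda>x. ind (x p) * g x"]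
    by (intro add_mono mult_mono) (simp_all add: abs_mult mult_le_one)
  finally show ?thesis by simp
qed

subsection \<open>Conjunctions\<close>

lemma card_Un_remove:
  assumes "finite A" "finite B" "w \<in> A \<union> B"
  shows "card (A \<union> B) = Suc (card ((A - {w}) \<union> (B - {w})))"
proof -
  have "(A - {w}) \<union> (B - {w}) = (A \<union> B) - {w}" by blast
  moreover have "Suc (card ((A \<union> B) - {w})) = card (A \<union> B)"
    using assms by (intro card_Suc_Diff1) auto
  ultimately show ?thesis by simp
qed

lemma conjunction_upd:
  "w \<notin> T0 \<Longrightarrow> w \<notin> T1 \<Longrightarrow> conjunction T0 T1 (x(w := b)) = conjunction T0 T1 x"
  unfolding conjunction_def by (auto intro!: arg_cong2[where f = "(*)"] prod.cong)

lemma conjunction_remove: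
  assumes "finite T0" "finite T1" "T0 \<inter> T1 = {}" "w \<in> T0 \<union> T1"
  shows "conjunction T0 T1 x
    = (if w \<in> T1 then ind (x w) else 1 - ind (x w)) * conjunction (T0 - {w}) (T1 - {w}) x"
proof (cases "w \<in> T1")
  case True
  with assms(3) have "T0 - {w} = T0" by blast
  with True assms(2) show ?thesis by (simp add: conjunction_def prod.remove mult.assoc)
next
  case False
  with assms(4) have "w \<in> T0" "T1 - {w} = T1" by auto
  with False assms(1) show ?thesis by (simp add: conjunction_def prod.remove mult_ac)
qed

lemma ind_mult_conjunction:
  assumes "p \<notin> T0" "finite T1"
  shows "ind (x p) * conjunction T0 T1 x = conjunction T0 (insert p T1) x"
proof (cases "p \<in> T1")
  case True
  then have "conjunction T0 T1 x = ind (x p) * conjunction T0 (T1 - {p}) x"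
    using assms(2) by (simp add: conjunction_def prod.remove mult.assoc)
  with True show ?thesis by (simp add: insert_absorb ind_def)
next
  case False
  with assms(2) show ?thesis by (simp add: conjunction_def mult_ac)
qed

lemma ind_mult_conjunction_eq_0:
  "p \<in> T0 \<Longrightarrow> finite T0 \<Longrightarrow> ind (x p) * conjunction T0 T1 x = 0"
  by (simp add: conjunction_def prod.remove ind_def)

lemma bn_L1_on_ind_mult_conjunction_le:
  fixes K :: real
  assumes "finite V" "1 \<le> K"
    and IH: "\<And>T0 T1. T0 \<subseteq> V \<Longrightarrow> T1 \<subseteq> V \<Longrightarrow> T0 \<inter> T1 = {}
      \<Longrightarrow> bn_L1_on par cp V (conjunction T0 T1) \<le> K ^ card (T0 \<union> T1)"
    and T: "T0 \<subseteq> V" "T1 \<subseteq> V" "T0 \<inter> T1 = {}"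
  shows "bn_L1_on par cp V (\<lambda>x. ind (x p) * conjunction T0 T1 x) \<le> K ^ Suc (card (T0 \<union> T1))"
proof -
  have fin: "finite T0" "finite T1" using T(1,2) assms(1) by (auto intro: finite_subset)
  consider "p \<notin> V" | "p \<in> T0" | "p \<in> V" "p \<notin> T0" by blast
  then show ?thesis
  proof cases
    case 1
    then show ?thesis using assms(2) by (simp add: bn_L1_on_ind_outside)
  next
    case 2
    then have "bn_L1_on par cp V (\<lambda>x. ind (x p) * conjunction T0 T1 x) = 0"
      using fin by (simp add: ind_mult_conjunction_eq_0 bn_L1_on_def bn_expect_def)
    then show ?thesis using assms(2) by simp
  next
    case 3
    have "bn_L1_on par cp V (\<lambda>x. ind (x p) * conjunction T0 T1 x)
        = bn_L1_on par cp V (conjunction T0 (insert p T1))"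
      using 3 fin by (simp add: ind_mult_conjunction)
    also have "\<dots> \<le> K ^ card (T0 \<union> insert p T1)"
      using 3 T by (intro IH) auto
    also have "\<dots> \<le> K ^ Suc (card (T0 \<union> T1))"
      using fin assms(2) by (intro power_increasing) (simp_all add: card_insert_le_m1 card_insert_if)
    finally show ?thesis .
  qed
qed

lemma bn_L1_on_conjunction_insert_leaf_le:
  fixes \<alpha> K :: real
  assumes "finite V" "new_leaf par V w"
    and mu: "\<And>x. 0 \<le> bn_mu par cp w x \<and> bn_mu par cp w x \<le> 1"
    and diff: "\<And>x y. \<bar>bn_mu par cp w x - bn_mu par cp w y\<bar> \<le> \<alpha>
      \<and> \<bar>bn_sigma par cp w x - bn_sigma par cp w y\<bar> \<le> \<alpha>"
    and K: "1 \<le> K" "2 + 2 * \<alpha> * K \<le> K"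
    and IH: "\<And>T0 T1. T0 \<subseteq> V \<Longrightarrow> T1 \<subseteq> V \<Longrightarrow> T0 \<inter> T1 = {}
      \<Longrightarrow> bn_L1_on par cp V (conjunction T0 T1) \<le> K ^ card (T0 \<union> T1)"
    and T: "T0 \<subseteq> insert w V" "T1 \<subseteq> insert w V" "T0 \<inter> T1 = {}"
  shows "bn_L1_on par cp (insert w V) (conjunction T0 T1) \<le> K ^ card (T0 \<union> T1)"
proof (cases "w \<in> T0 \<union> T1")
  case False
  then have "T0 \<subseteq> V" "T1 \<subseteq> V" using T by auto
  with False show ?thesis
    by (simp add: bn_L1_on_insert_leaf_indep[OF assms(1,2) mu] conjunction_upd IH T(3))
next
  case True
  define T0' T1' where "T0' = T0 - {w}" and "T1' = T1 - {w}"
  have T': "T0' \<subseteq> V" "T1' \<subseteq> V" "T0' \<inter> T1' = {}"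
    using T assms(2) by (auto simp: T0'_def T1'_def new_leaf_def)
  have fin: "finite T0" "finite T1" using T assms(1) by (auto intro: finite_subset)
  have card: "card (T0 \<union> T1) = Suc (card (T0' \<union> T1'))"
    unfolding T0'_def T1'_def using fin True by (rule card_Un_remove)
  define h where "h b = (if w \<in> T1 then ind b else 1 - ind b)" for b
  have h: "0 \<le> h b \<and> h b \<le> 1" for b by (simp add: h_def ind_def)
  have factor: "conjunction T0 T1 = (\<lambda>x. h (x w) * conjunction T0' T1' x)"
    unfolding h_def T0'_def T1'_def by (rule ext, rule conjunction_remove[OF fin T(3) True])
  obtain a1 b1 p a2 b2 where affine: "\<And>x. bn_mu par cp w x = a1 + b1 * ind (x p)"
    "\<And>x. bn_sigma par cp w x = a2 + b2 * ind (x p)" and b: "\<bar>b1\<bar> \<le> \<alpha>" "\<bar>b2\<bar> \<le> \<alpha>"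
    by (rule bn_mu_sigma_affine[OF diff]) (rule that)
  have "0 \<le> \<alpha>" using b(1) by linarith
  have "bn_L1_on par cp (insert w V) (\<lambda>x. h (x w) * conjunction T0' T1' x)
      \<le> 2 * bn_L1_on par cp V (conjunction T0' T1')
        + 2 * \<alpha> * bn_L1_on par cp V (\<lambda>x. ind (x p) * conjunction T0' T1' x)"
    by (rule bn_L1_on_insert_leaf_factor_le[OF assms(1,2) mu _ affine b h])
      (simp add: conjunction_upd T0'_def T1'_def)
  also have "\<dots> \<le> 2 * K ^ card (T0' \<union> T1') + 2 * \<alpha> * K ^ Suc (card (T0' \<union> T1'))"
  proof -
    have "bn_L1_on par cp V (\<lambda>x. ind (x p) * conjunction T0' T1' x) \<le> K ^ Suc (card (T0' \<union> T1'))"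
      by (rule bn_L1_on_ind_mult_conjunction_le[OF assms(1) K(1) IH T'])
    then show ?thesis
      using IH[OF T'] \<open>0 \<le> \<alpha>\<close> by (intro add_mono mult_left_mono) simp_all
  qed
  also have "\<dots> = (2 + 2 * \<alpha> * K) * K ^ card (T0' \<union> T1')" by (simp add: algebra_simps)
  also have "\<dots> \<le> K ^ card (T0 \<union> T1)" unfolding card using K by simp
  finally show ?thesis unfolding factor .
qed

lemma bn_L1_on_conjunction_le:
  fixes \<alpha> :: real and rank :: "nat \<Rightarrow> nat"
  assumes "finite V" "0 \<le> \<alpha>" "\<alpha> < 1/2"
    and "\<forall>v\<in>V. \<forall>u. par v = Some u \<longrightarrow> u \<in> V \<and> rank u < rank v"
    and "\<forall>v\<in>V. \<forall>x. 0 \<le> bn_mu par cp v x \<and> bn_mu par cp v x \<le> 1"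
    and "\<forall>v\<in>V. \<forall>x y. \<bar>bn_mu par cp v x - bn_mu par cp v y\<bar> \<le> \<alpha>
      \<and> \<bar>bn_sigma par cp v x - bn_sigma par cp v y\<bar> \<le> \<alpha>"
    and "T0 \<subseteq> V" "T1 \<subseteq> V" "T0 \<inter> T1 = {}"
  shows "bn_L1_on par cp V (conjunction T0 T1) \<le> (2 / (1 - 2 * \<alpha>)) ^ card (T0 \<union> T1)"
  using assms(1,4-9)
proof (induction V arbitrary: T0 T1 rule: finite_ranking_induct[where f = rank])
  case empty
  have "cube_on {} = {\<lambda>_. False}" by (auto simp: cube_on_def)
  with empty show ?case
    by (simp add: bn_L1_on_def bn_expect_def bn_dist_on_def bn_phiS_def conjunction_def)
next
  case (insert w V)
  define K where "K = 2 / (1 - 2 * \<alpha>)"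
  show ?case
  proof (cases "w \<in> V")
    case True
    with insert show ?thesis by (simp add: insert_absorb)
  next
    case False
    have "rank w < rank v" if "v \<in> V" "par v = Some w" for v
      using insert.prems(1) that by blast
    then have leaf: "new_leaf par V w"
      using False insert.prems(1) insert.hyps(2) unfolding new_leaf_def by fastforce
    have closed: "\<forall>v\<in>V. \<forall>u. par v = Some u \<longrightarrow> u \<in> V \<and> rank u < rank v"
      using insert.prems(1) leaf unfolding new_leaf_def by blast
    have K: "1 \<le> K" "2 + 2 * \<alpha> * K \<le> K"
      using assms(2,3) by (simp_all add: K_def field_simps)
    show ?thesis
      unfolding K_def[symmetric]
      by (rule bn_L1_on_conjunction_insert_leaf_le[OF insert.hyps(1) leaf _ _ K])
        (use insert.prems in \<open>auto intro!: insert.IH[OF closed, unfolded K_def[symmetric]]\<close>)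
  qed
qed

lemma forest_bn_restrict:
  assumes "forest_bn n par" "v < n"
  shows "(\<lambda>i. i < n \<and> x i) \<in> cube n"
    and "bn_mu par cp v (\<lambda>i. i < n \<and> x i) = bn_mu par cp v x"
    and "bn_sigma par cp v (\<lambda>i. i < n \<and> x i) = bn_sigma par cp v x"
proof -
  have parent: "(u < n \<and> x u) = x u" if "par v = Some u" for u
    using assms that unfolding forest_bn_def by blast
  show "bn_mu par cp v (\<lambda>i. i < n \<and> x i) = bn_mu par cp v x"
    by (rule bn_mu_cong) (rule parent)
  show "bn_sigma par cp v (\<lambda>i. i < n \<and> x i) = bn_sigma par cp v x"
    by (rule bn_sigma_cong) (rule parent)
qed (simp add: cube_def)

lemma forest_bn_mu_bounds:
  assumes "forest_bn n par" "\<forall>v<n. \<forall>x\<in>cube n. 0 < bn_mu par cp v x \<and> bn_mu par cp v x < 1"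
  shows "\<forall>v\<in>{..<n}. \<forall>x. 0 \<le> bn_mu par cp v x \<and> bn_mu par cp v x \<le> 1"
proof (intro ballI allI)
  fix v x assume "v \<in> {..<n}"
  then have "v < n" by simp
  then show "0 \<le> bn_mu par cp v x \<and> bn_mu par cp v x \<le> 1"
  proof -
    have "0 < bn_mu par cp v (\<lambda>i. i < n \<and> x i) \<and> bn_mu par cp v (\<lambda>i. i < n \<and> x i) < 1"
      using assms(2) \<open>v < n\<close> forest_bn_restrict(1)[OF assms(1) \<open>v < n\<close>] by blast
    then show ?thesis using forest_bn_restrict(2)[OF assms(1) \<open>v < n\<close>] by simp
  qed
qed

lemma forest_bn_diff_bounded:
  assumes "forest_bn n par" "diff_bounded n par cp \<alpha>"
  shows "\<forall>v\<in>{..<n}. \<forall>x y. \<bar>bn_mu par cp v x - bn_mu par cp v y\<bar> \<le> \<alpha>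
    \<and> \<bar>bn_sigma par cp v x - bn_sigma par cp v y\<bar> \<le> \<alpha>"
proof (intro ballI allI)
  fix v x y assume "v \<in> {..<n}"
  then have "v < n" by simp
  then show "\<bar>bn_mu par cp v x - bn_mu par cp v y\<bar> \<le> \<alpha>
    \<and> \<bar>bn_sigma par cp v x - bn_sigma par cp v y\<bar> \<le> \<alpha>"
  proof -
    let ?x = "\<lambda>i. i < n \<and> x i" and ?y = "\<lambda>i. i < n \<and> y i"
    have "\<bar>bn_mu par cp v ?x - bn_mu par cp v ?y\<bar> \<le> \<alpha>
        \<and> \<bar>bn_sigma par cp v ?x - bn_sigma par cp v ?y\<bar> \<le> \<alpha>"
      using assms(2) \<open>v < n\<close> forest_bn_restrict(1)[OF assms(1) \<open>v < n\<close>]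
      unfolding diff_bounded_def by blast
    then show ?thesis using forest_bn_restrict(2,3)[OF assms(1) \<open>v < n\<close>] by simp
  qed
qed

lemma two_div_le_square:
  fixes \<alpha> :: real
  assumes "\<alpha> < 1/2"
  shows "2 / (1 - 2 * \<alpha>) \<le> ((2 - 2 * \<alpha>) / (1 - 2 * \<alpha>)) ^ 2"
proof -
  define t where "t = 1 - 2 * \<alpha>"
  have t: "0 < t" "2 - 2 * \<alpha> = 1 + t" using assms by (simp_all add: t_def)
  have "(1 + t)\<^sup>2 = 2 * t + (1 + t\<^sup>2)" by (simp add: power2_eq_square algebra_simps)
  then have "2 * t / t\<^sup>2 \<le> (1 + t)\<^sup>2 / t\<^sup>2"
    by (intro divide_right_mono) simp_all
  with t show ?thesis
    unfolding t(2) t_def[symmetric] by (simp add: power_divide power2_eq_square)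
qed

theorem mainTheorem8:
  fixes n d :: nat and \<alpha> :: real
    and par :: "nat \<Rightarrow> nat option" and cp :: "nat \<Rightarrow> bool \<Rightarrow> real"
    and T0 T1 :: "nat set"
  assumes "0 \<le> \<alpha>" and "\<alpha> < 1/2"
    and "forest_bn n par"
    and "\<forall>v<n. \<forall>x\<in>cube n. 0 < bn_mu par cp v x \<and> bn_mu par cp v x < 1"
    and "diff_bounded n par cp \<alpha>"
    and "T0 \<subseteq> {..<n}" and "T1 \<subseteq> {..<n}" and "T0 \<inter> T1 = {}"
    and "card (T0 \<union> T1) = d"
  shows "bn_L1 n par cp (conjunction T0 T1) \<le> ((2 - 2*\<alpha>) / (1 - 2*\<alpha>)) ^ (2*d)"
proof -
  obtain rank :: "nat \<Rightarrow> nat" where "\<forall>v<n. \<forall>u. par v = Some u \<longrightarrow> rank u < rank v"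
    using assms(3) unfolding forest_bn_def by blast
  with assms(3) have ranked: "\<forall>v\<in>{..<n}. \<forall>u. par v = Some u \<longrightarrow> u \<in> {..<n} \<and> rank u < rank v"
    unfolding forest_bn_def by auto
  have "bn_L1 n par cp (conjunction T0 T1) \<le> (2 / (1 - 2 * \<alpha>)) ^ d"
    using bn_L1_on_conjunction_le[OF finite_lessThan assms(1,2) ranked
        forest_bn_mu_bounds[OF assms(3,4)] forest_bn_diff_bounded[OF assms(3,5)] assms(6-8)]
    by (simp add: bn_L1_eq_bn_L1_on assms(9))
  also have "\<dots> \<le> (((2 - 2 * \<alpha>) / (1 - 2 * \<alpha>)) ^ 2) ^ d"
    using assms(1,2) by (intro power_mono two_div_le_square) simp_all
  finally show ?thesis by (simp add: power_mult)
qed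

end
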